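(* Let $K$ be a field of characteristic $\neq2$ with the identity involution, let $\varepsilon,\delta\in\{1,-1\}$, and suppose $A$ is a nonsingular $n\times n$ matrix and $\Phi$ an $n\times n$ Frobenius block with $A=\varepsilon A^T$ and $A\Phi=\delta(A\Phi)^T$. Then $\varepsilon=1$ or $\delta=1$. If moreover $\chi_\Phi(x)=x^n$, then $\varepsilon=1$ when $n$ is odd and $\delta=1$ when $n$ is even.
   Context: A Frobenius block is an $n\times n$ matrix $\Phi$ with ones on the subdiagonal, last column $(-c_n,\dots,-c_1)^T$, zeros elsewhere, whose characteristic polynomial $\chi_\Phi(x)=x^n+c_1x^{n-1}+\dots+c_n$ is a power of an irreducible polynomial. With the identity involution, $A^*=A^T$. *)

theory Defs
  imports "Jordan_Normal_Form.Char_Poly"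
begin

definition frob_mat :: "nat \<Rightarrow> (nat \<Rightarrow> 'a::comm_ring_1) \<Rightarrow> 'a mat" where
  "frob_mat n c = mat n n (\<lambda>(i, j).
      if j = n - 1 then - c (n - i) else if i = j + 1 then 1 else 0)"

definition frobenius_block :: "nat \<Rightarrow> 'a::field mat \<Rightarrow> bool" where
  "frobenius_block n \<Phi> \<longleftrightarrow>
     (\<exists>c. \<Phi> = frob_mat n c) \<and>
     (\<exists>p k. irreducible p \<and> k > 0 \<and> char_poly \<Phi> = p ^ k)"

end

theory Submission
  imports Defs
begin

text \<open>Put \<open>s = \<epsilon> \<delta>\<close>. Right multiplication by \<open>\<Phi>\<close> shifts columns to the left, so comparing
  entries of \<open>A = \<epsilon> A\<^sup>T\<close> and \<open>A \<Phi> = \<delta> (A \<Phi>)\<^sup>T\<close> gives \<open>A(i, j+1) = s A(i+1, j)\<close>: \<open>A\<close> is a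
  "twisted Hankel" matrix, whose entries along each antidiagonal agree up to powers of \<open>s\<close>.
  If \<open>\<epsilon> = \<delta> = -1\<close> then \<open>s = 1\<close>, so \<open>A\<close> is Hankel, hence symmetric, and also skew-symmetric,
  hence zero. If \<open>\<Phi>\<close> is nilpotent its last column vanishes, which forces the last column of \<open>A\<close>
  to vanish below the corner \<open>a = A(0, n-1)\<close>, so \<open>a \<noteq> 0\<close>; walking the antidiagonal from
  \<open>(0, n-1)\<close> to \<open>(n-1, 0)\<close> gives \<open>a = s\<^sup>n\<^sup>-\<^sup>1 \<epsilon> a\<close>, and the parity of \<open>n\<close> decides which
  sign is forced to be \<open>1\<close>.\<close>

lemma monic_dvd_eq:
  fixes p q :: "'a::field poly"
  assumes dvd: "p dvd q" and deg: "degree p = degree q"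
    and monic: "lead_coeff p = 1" "lead_coeff q = 1"
  shows "p = q"
proof -
  obtain r where q: "q = p * r" using dvd by (elim dvdE)
  have p0: "p \<noteq> 0" and r0: "r \<noteq> 0" using q monic by auto
  have "degree r = 0" using degree_mult_eq[OF p0 r0] q deg by simp
  then have "r = [:lead_coeff r:]" by (simp add: degree_0_id)
  moreover have "lead_coeff r = 1" using q monic by (simp add: lead_coeff_mult)
  ultimately show ?thesis using q by simp
qed

lemma dvd_det_if_mult_vec_eq_unit_vec:
  fixes M :: "'a::comm_ring_1 mat"
  assumes M: "M \<in> carrier_mat n n" and w: "w \<in> carrier_vec n" and k: "k < n" "w $ k = 1"
    and l: "l < n" and Mw: "M *\<^sub>v w = p \<cdot>\<^sub>v unit_vec n l"
  shows "p dvd det M"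
proof -
  have "det M = ((adj_mat M * M) *\<^sub>v w) $ k"
    using adj_mat[OF M] w k by simp
  also have "\<dots> = (adj_mat M *\<^sub>v (p \<cdot>\<^sub>v unit_vec n l)) $ k"
    by (simp only: assoc_mult_mat_vec[OF adj_mat(1)[OF M] M w] Mw)
  also have "\<dots> = p * adj_mat M $$ (k, l)"
    using adj_mat(1)[OF M] k l by simp
  finally show ?thesis by simp
qed

lemma frob_mat_carrier [simp]: "frob_mat n c \<in> carrier_mat n n"
  unfolding frob_mat_def by simp

lemma dim_frob_mat [simp]: "dim_row (frob_mat n c) = n" "dim_col (frob_mat n c) = n"
  unfolding frob_mat_def by simp_all

lemma index_frob_mat:
  "i < n \<Longrightarrow> j < n \<Longrightarrow> frob_mat n c $$ (i, j) =
    (if j = n - 1 then - c (n - i) else if i = j + 1 then 1 else 0)"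
  unfolding frob_mat_def by simp

lemma char_poly_frob_mat:
  fixes c :: "nat \<Rightarrow> 'a::field"
  assumes n: "n > 0"
  shows "char_poly (frob_mat n c) = monom 1 n + (\<Sum>i<n. monom (c (n - i)) i)"
    (is "_ = ?p")
proof (rule sym, rule monic_dvd_eq)
  let ?F = "frob_mat n c"
  let ?M = "transpose_mat (char_poly_matrix ?F)"
  have coeff_p: "coeff ?p k = (if k = n then 1 else if k < n then c (n - k) else 0)" for k
    by (auto simp: coeff_sum)
  have deg_p: "degree ?p = n"
  proof (rule antisym)
    show "degree ?p \<le> n" by (rule degree_le) (simp only: coeff_p, simp)
    show "n \<le> degree ?p" by (rule le_degree) (simp only: coeff_p, simp)
  qed
  \<comment> \<open>\<open>(x I - F)\<^sup>T\<close> maps \<open>(1, x, \<dots>, x\<^sup>n\<^sup>-\<^sup>1)\<close> to \<open>(0, \<dots>, 0, ?p)\<close>\<close>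
  define w where "w = vec n (\<lambda>i. monom (1::'a) i)"
  have M: "?M \<in> carrier_mat n n" by simp
  have dims: "dim_row (char_poly_matrix ?F) = n" "dim_col (char_poly_matrix ?F) = n"
    by (simp_all add: char_poly_matrix_def)
  have Mw: "?M *\<^sub>v w = ?p \<cdot>\<^sub>v unit_vec n (n - 1)"
  proof (rule eq_vecI)
    fix j assume "j < dim_vec (?p \<cdot>\<^sub>v unit_vec n (n - 1))"
    then have j: "j < n" by simp
    have entry: "char_poly_matrix ?F $$ (i, j) * monom 1 i =
        (if i = j then monom 1 (Suc i) else 0) - monom (?F $$ (i, j)) i" if "i < n" for i
      using that j by (simp add: char_poly_matrix_def monom_altdef algebra_simps)
    have "(?M *\<^sub>v w) $ j = (\<Sum>i<n. char_poly_matrix ?F $$ (i, j) * monom 1 i)"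
      using j dims unfolding w_def mult_mat_vec_def scalar_prod_def
      by (auto simp: lessThan_atLeast0 intro!: sum.cong)
    also have "\<dots> = (\<Sum>i<n. (if i = j then monom 1 (Suc i) else 0) - monom (?F $$ (i, j)) i)"
      using entry by simp
    also have "\<dots> = monom 1 (Suc j) - (\<Sum>i<n. monom (?F $$ (i, j)) i)"
      using j by (simp add: sum_subtractf)
    also have "\<dots> = (?p \<cdot>\<^sub>v unit_vec n (n - 1)) $ j"
    proof (cases "j = n - 1")
      case True
      then have "(\<Sum>i<n. monom (?F $$ (i, j)) i) = (\<Sum>i<n. - monom (c (n - i)) i)"
        by (intro sum.cong) (simp_all add: index_frob_mat minus_monom)
      then show ?thesis using True n by (simp add: sum_negf)
    next
      case False
      then have "(\<Sum>i<n. monom (?F $$ (i, j)) i) = (\<Sum>i<n. if i = Suc j then monom 1 i else 0)"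
        using j by (intro sum.cong) (auto simp: index_frob_mat)
      then show ?thesis using False j by simp
    qed
    finally show "(?M *\<^sub>v w) $ j = (?p \<cdot>\<^sub>v unit_vec n (n - 1)) $ j" .
  qed (simp add: w_def dims)
  have "?p dvd det ?M"
    by (rule dvd_det_if_mult_vec_eq_unit_vec[OF M _ n _ _ Mw]) (auto simp: w_def n)
  moreover have "det ?M = char_poly ?F"
    unfolding char_poly_def by (rule det_transpose[of _ n]) (simp add: carrier_matI dims)
  ultimately show "?p dvd char_poly ?F" by simp
  show "degree ?p = degree (char_poly ?F)"
    using deg_p degree_monic_char_poly[OF frob_mat_carrier[of n c]] by simp
  show "lead_coeff ?p = 1" unfolding deg_p coeff_p by simp
  show "lead_coeff (char_poly ?F) = 1"
    using degree_monic_char_poly[OF frob_mat_carrier[of n c]] by simp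
qed

lemma frob_mat_coeffs_eq_0_if_char_poly_monom:
  fixes c :: "nat \<Rightarrow> 'a::field"
  assumes n: "n > 0" and char: "char_poly (frob_mat n c) = monom 1 n" and k: "k < n"
  shows "c (n - k) = 0"
proof -
  have "(\<Sum>i<n. monom (c (n - i)) i) = 0"
    using char_poly_frob_mat[OF n, of c] char by simp
  then have "coeff (\<Sum>i<n. monom (c (n - i)) i) k = 0" by simp
  then show ?thesis using k by (simp add: coeff_sum)
qed

lemma frobenius_block_dim_pos:
  assumes "frobenius_block n \<Phi>"
  shows "n > 0"
proof (rule ccontr)
  assume "\<not> n > 0"
  then have "char_poly \<Phi> = 1"
    using assms unfolding frobenius_block_def char_poly_def by (auto intro: det_dim_zero)
  with assms obtain p :: "'a poly" and k where p: "irreducible p" and "k > 0" "p ^ k = 1"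
    unfolding frobenius_block_def by auto
  then have "is_unit p" using is_unit_power_iff[of p k] by simp
  with p show False using irreducible_not_unit by blast
qed

lemma det_eq_0_if_zero_col:
  fixes A :: "'a::comm_ring_1 mat"
  assumes A: "A \<in> carrier_mat n n" and j: "j < n" and zero: "\<And>i. i < n \<Longrightarrow> A $$ (i, j) = 0"
  shows "det A = 0"
  using laplace_expansion_column[OF A j] zero by simp

lemma index_eq_smult_transpose_mat:
  assumes "A = e \<cdot>\<^sub>m transpose_mat A" and "A \<in> carrier_mat n n" and "i < n" "j < n"
  shows "A $$ (i, j) = e * A $$ (j, i)"
  using arg_cong[OF assms(1), of "\<lambda>M. M $$ (i, j)"] assms(2-4) by simp

lemma index_mult_frob_mat:
  fixes A :: "'a::comm_ring_1 mat"
  assumes A: "A \<in> carrier_mat m n" and i: "i < m" and j: "j < n"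
  shows "(A * frob_mat n c) $$ (i, j) =
    (if j = n - 1 then - (\<Sum>k<n. A $$ (i, k) * c (n - k)) else A $$ (i, Suc j))"
proof -
  have "(A * frob_mat n c) $$ (i, j) =
      (\<Sum>k<n. A $$ (i, k) * (if j = n - 1 then - c (n - k) else if k = Suc j then 1 else 0))"
    using A i j unfolding times_mat_def scalar_prod_def
    by (auto simp: index_frob_mat lessThan_atLeast0 intro!: sum.cong)
  also have "\<dots> = (if j = n - 1 then - (\<Sum>k<n. A $$ (i, k) * c (n - k)) else A $$ (i, Suc j))"
    using j by (auto simp: sum_negf if_distrib[of "\<lambda>x. _ * x"] cong: if_cong)
  finally show ?thesis .
qed

lemma sym_mult_frob_mat_shift:
  fixes A :: "'a::comm_ring_1 mat"
  assumes A: "A \<in> carrier_mat n n" and symA: "A = \<epsilon> \<cdot>\<^sub>m transpose_mat A"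
    and symAF: "A * frob_mat n c = \<delta> \<cdot>\<^sub>m transpose_mat (A * frob_mat n c)"
    and i: "i < n - 1" and j: "j < n - 1"
  shows "A $$ (i, Suc j) = \<epsilon> * \<delta> * A $$ (Suc i, j)"
proof -
  have AF: "A * frob_mat n c \<in> carrier_mat n n" using A by simp
  have "A $$ (i, Suc j) = (A * frob_mat n c) $$ (i, j)"
    using index_mult_frob_mat[OF A, of i j] i j by (simp del: index_mult_mat)
  also have "\<dots> = \<delta> * (A * frob_mat n c) $$ (j, i)"
    using index_eq_smult_transpose_mat[OF symAF AF, of i j] i j by simp
  also have "\<dots> = \<delta> * A $$ (j, Suc i)"
    using index_mult_frob_mat[OF A, of j i] i j by (simp del: index_mult_mat)
  also have "\<dots> = \<delta> * (\<epsilon> * A $$ (Suc i, j))"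
    using index_eq_smult_transpose_mat[OF symA A, of j "Suc i"] i j by simp
  finally show ?thesis by (simp add: ac_simps)
qed

lemma sym_mult_frob_mat_last_col:
  fixes A :: "'a::comm_ring_1 mat"
  assumes A: "A \<in> carrier_mat n n" and symA: "A = \<epsilon> \<cdot>\<^sub>m transpose_mat A"
    and symAF: "A * frob_mat n c = \<delta> \<cdot>\<^sub>m transpose_mat (A * frob_mat n c)"
    and c: "\<And>k. k < n \<Longrightarrow> c (n - k) = 0" and i: "i < n - 1"
  shows "A $$ (Suc i, n - 1) = 0"
proof -
  have AF: "A * frob_mat n c \<in> carrier_mat n n" using A by simp
  have "A $$ (Suc i, n - 1) = \<epsilon> * A $$ (n - 1, Suc i)"
    using index_eq_smult_transpose_mat[OF symA A, of "Suc i" "n - 1"] i by simp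
  also have "A $$ (n - 1, Suc i) = (A * frob_mat n c) $$ (n - 1, i)"
    using index_mult_frob_mat[OF A, of "n - 1" i] i by (simp del: index_mult_mat)
  also have "\<dots> = \<delta> * (A * frob_mat n c) $$ (i, n - 1)"
    using index_eq_smult_transpose_mat[OF symAF AF, of "n - 1" i] i by simp
  also have "(A * frob_mat n c) $$ (i, n - 1) = 0"
    using index_mult_frob_mat[OF A, of i "n - 1"] i c by (simp del: index_mult_mat)
  finally show ?thesis by simp
qed

lemma twisted_hankel_antidiagonal:
  fixes A :: "'a::comm_monoid_mult mat"
  assumes shift: "\<And>i j. i < n - 1 \<Longrightarrow> j < n - 1 \<Longrightarrow> A $$ (i, Suc j) = s * A $$ (Suc i, j)"
  shows "i + d < n \<Longrightarrow> d \<le> j \<Longrightarrow> j < n \<Longrightarrow> A $$ (i, j) = s ^ d * A $$ (i + d, j - d)"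
proof (induction d)
  case (Suc d)
  then have "i + d < n - 1" "j - Suc d < n - 1" by auto
  then have step: "A $$ (i + d, Suc (j - Suc d)) = s * A $$ (i + Suc d, j - Suc d)"
    by (simp add: shift)
  have "A $$ (i, j) = s ^ d * A $$ (i + d, Suc (j - Suc d))"
    using Suc by (simp add: Suc_diff_Suc)
  also have "\<dots> = s ^ Suc d * A $$ (i + Suc d, j - Suc d)"
    by (simp add: step mult_ac)
  finally show ?case .
qed simp

lemma det_skew_symmetric_hankel_eq_0:
  fixes A :: "'a::field mat"
  assumes two: "(2::'a) \<noteq> 0" and A: "A \<in> carrier_mat n n" and n: "n > 0"
    and skew: "\<And>i j. i < n \<Longrightarrow> j < n \<Longrightarrow> A $$ (i, j) = - A $$ (j, i)"
    and hankel: "\<And>i j. i < n - 1 \<Longrightarrow> j < n - 1 \<Longrightarrow> A $$ (i, Suc j) = A $$ (Suc i, j)"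
  shows "det A = 0"
proof (rule det_eq_0_if_zero_col[OF A n])
  have sym: "A $$ (i, j) = A $$ (j, i)" if "i \<le> j" "j < n" for i j
    using twisted_hankel_antidiagonal[of n A 1 i "j - i" j] hankel that by simp
  fix i assume i: "i < n"
  have "A $$ (i, 0) = - A $$ (i, 0)" using skew[OF i n] sym[of 0 i] i by simp
  then show "A $$ (i, 0) = 0" using two by (simp add: eq_neg_iff_add_eq_0 flip: mult_2)
qed

lemma twisted_hankel_corner_sign:
  fixes A :: "'a::field mat"
  assumes A: "A \<in> carrier_mat n n" and n: "n > 0" and nonsing: "det A \<noteq> 0"
    and symA: "A = \<epsilon> \<cdot>\<^sub>m transpose_mat A"
    and shift: "\<And>i j. i < n - 1 \<Longrightarrow> j < n - 1 \<Longrightarrow> A $$ (i, Suc j) = s * A $$ (Suc i, j)"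
    and last_col: "\<And>i. i < n - 1 \<Longrightarrow> A $$ (Suc i, n - 1) = 0"
  shows "\<epsilon> * s ^ (n - 1) = 1"
proof -
  have "A $$ (0, n - 1) \<noteq> 0"
  proof
    assume "A $$ (0, n - 1) = 0"
    then have "A $$ (i, n - 1) = 0" if "i < n" for i
      using last_col[of "i - 1"] that by (cases i) auto
    then have "det A = 0" using n by (intro det_eq_0_if_zero_col[OF A, of "n - 1"]) auto
    with nonsing show False by simp
  qed
  moreover have "A $$ (0, n - 1) = s ^ (n - 1) * A $$ (n - 1, 0)"
    using twisted_hankel_antidiagonal[of n A s 0 "n - 1" "n - 1"] shift n by simp
  moreover have "A $$ (n - 1, 0) = \<epsilon> * A $$ (0, n - 1)"
    using index_eq_smult_transpose_mat[OF symA A, of "n - 1" 0] n by simp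
  ultimately show ?thesis by (simp add: mult_ac)
qed

lemma sign_cases_by_parity:
  fixes \<epsilon> \<delta> :: "'a::comm_ring_1"
  assumes "\<epsilon> \<in> {1, -1}" "\<delta> \<in> {1, -1}" "n > 0" and sign: "\<epsilon> * (\<epsilon> * \<delta>) ^ (n - 1) = 1"
  shows "(odd n \<longrightarrow> \<epsilon> = 1) \<and> (even n \<longrightarrow> \<delta> = 1)"
proof -
  have sq: "(\<epsilon> * \<delta>) ^ 2 = 1" "\<epsilon> * \<epsilon> = 1" using assms(1,2) by auto
  have "\<epsilon> = 1" if "odd n"
  proof -
    have "n - 1 = 2 * (n div 2)" using that by presburger
    then show ?thesis using sign sq by (simp add: power_mult)
  qed
  moreover have "\<delta> = 1" if "even n"
  proof -
    have "n - 1 = 2 * (n div 2 - 1) + 1" using that \<open>n > 0\<close> by presburger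
    then have "(\<epsilon> * \<epsilon>) * \<delta> = 1" using sign sq by (simp add: power_add power_mult ac_simps)
    then show ?thesis using sq by simp
  qed
  ultimately show ?thesis by blast
qed

theorem lemma8:
  fixes A \<Phi> :: "'a::field mat" and n :: nat and \<epsilon> \<delta> :: 'a
  assumes char: "(2::'a) \<noteq> 0"
    and eps: "\<epsilon> \<in> {1, -1}" and del: "\<delta> \<in> {1, -1}"
    and A: "A \<in> carrier_mat n n" and nonsing: "det A \<noteq> 0"
    and frob: "frobenius_block n \<Phi>"
    and symA: "A = \<epsilon> \<cdot>\<^sub>m transpose_mat A"
    and symAPhi: "A * \<Phi> = \<delta> \<cdot>\<^sub>m transpose_mat (A * \<Phi>)"
  shows "(\<epsilon> = 1 \<or> \<delta> = 1) \<and>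
         (char_poly \<Phi> = monom 1 n \<longrightarrow>
            (odd n \<longrightarrow> \<epsilon> = 1) \<and> (even n \<longrightarrow> \<delta> = 1))"
proof -
  obtain c where Phi: "\<Phi> = frob_mat n c" using frob by (auto simp: frobenius_block_def)
  have n: "n > 0" using frob by (rule frobenius_block_dim_pos)
  note symAF = symAPhi[unfolded Phi]
  note shift = sym_mult_frob_mat_shift[OF A symA symAF]
  have "\<epsilon> = 1 \<or> \<delta> = 1"
  proof (rule ccontr)
    assume "\<not> (\<epsilon> = 1 \<or> \<delta> = 1)"
    then have "\<epsilon> = -1" "\<delta> = -1" using eps del by auto
    then have "det A = 0"
    proof (intro det_skew_symmetric_hankel_eq_0[OF char A n])
      show "A $$ (i, j) = - A $$ (j, i)" if "i < n" "j < n" for i j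
        using index_eq_smult_transpose_mat[OF symA A, of i j] that \<open>\<epsilon> = -1\<close> by simp
      show "A $$ (i, Suc j) = A $$ (Suc i, j)" if "i < n - 1" "j < n - 1" for i j
        using shift[OF that] \<open>\<epsilon> = -1\<close> \<open>\<delta> = -1\<close> by simp
    qed
    with nonsing show False by simp
  qed
  moreover have "(odd n \<longrightarrow> \<epsilon> = 1) \<and> (even n \<longrightarrow> \<delta> = 1)" if "char_poly \<Phi> = monom 1 n"
  proof (rule sign_cases_by_parity[OF eps del n])
    have "c (n - k) = 0" if "k < n" for k
      using frob_mat_coeffs_eq_0_if_char_poly_monom[OF n _ that] \<open>char_poly \<Phi> = monom 1 n\<close> Phi
      by simp
    then have "A $$ (Suc i, n - 1) = 0" if "i < n - 1" for i
      using sym_mult_frob_mat_last_col[OF A symA symAF] that by blast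
    then show "\<epsilon> * (\<epsilon> * \<delta>) ^ (n - 1) = 1"
      using twisted_hankel_corner_sign[OF A n nonsing symA shift] by blast
  qed
  ultimately show ?thesis by blast
qed

end
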